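(* Let $\mathfrak g$ be a $7$-dimensional real nilpotent Lie algebra and let $\varphi\in\Lambda^3\mathfrak g^*$ define a calibrated $\mathrm{G}_2$-structure on $\mathfrak g$. Then $\varphi$ is not exact; in particular $H^3(\mathfrak g^* )\neq0$.
   Context: A $3$-form $\varphi\in\Lambda^3\mathfrak g^*$ on a $7$-dimensional Lie algebra defines a $\mathrm{G}_2$-structure if there is a basis $f^1,\dots,f^7$ of $\mathfrak g^*$ with $\varphi=f^{127}+f^{347}+f^{567}+f^{135}-f^{236}-f^{146}-f^{245}$; it is calibrated if $d\varphi=0$, where $d$ is the Chevalley–Eilenberg differential, and $H^3(\mathfrak g^* )$ is the corresponding cohomology. *)

theory Defs
  imports "HOL-Analysis.Analysis"
begin

definition lie_algebra :: "('a::real_vector \<Rightarrow> 'a \<Rightarrow> 'a) \<Rightarrow> bool" where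
  "lie_algebra br \<longleftrightarrow> bilinear br \<and> (\<forall>x. br x x = 0) \<and>
     (\<forall>x y z. br x (br y z) + br y (br z x) + br z (br x y) = 0)"

fun lcs :: "('a::real_vector \<Rightarrow> 'a \<Rightarrow> 'a) \<Rightarrow> nat \<Rightarrow> 'a set" where
  "lcs br 0 = UNIV"
| "lcs br (Suc n) = span {br x y | x y. y \<in> lcs br n}"

definition nilpotent_lie :: "('a::real_vector \<Rightarrow> 'a \<Rightarrow> 'a) \<Rightarrow> bool" where
  "nilpotent_lie br \<longleftrightarrow> lie_algebra br \<and> (\<exists>n. lcs br n = {0})"

definition two_form :: "('a::real_vector \<Rightarrow> 'a \<Rightarrow> real) \<Rightarrow> bool" where
  "two_form b \<longleftrightarrow> bilinear b \<and> (\<forall>x. b x x = 0)"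

definition three_form :: "('a::real_vector \<Rightarrow> 'a \<Rightarrow> 'a \<Rightarrow> real) \<Rightarrow> bool" where
  "three_form p \<longleftrightarrow> (\<forall>y z. linear (\<lambda>x. p x y z)) \<and> (\<forall>x z. linear (\<lambda>y. p x y z)) \<and>
     (\<forall>x y. linear (\<lambda>z. p x y z)) \<and>
     (\<forall>x z. p x x z = 0) \<and> (\<forall>x y. p x y y = 0) \<and> (\<forall>x y. p x y x = 0)"

text \<open>Chevalley--Eilenberg differential
  d a (x_0,...,x_k) = sum_{i<j} (-1)^(i+j) a([x_i,x_j], x_0,..^i..^j..,x_k).\<close>
definition ce_d2 :: "('a \<Rightarrow> 'a \<Rightarrow> 'a) \<Rightarrow> ('a \<Rightarrow> 'a \<Rightarrow> real) \<Rightarrow> ('a \<Rightarrow> 'a \<Rightarrow> 'a \<Rightarrow> real)" where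
  "ce_d2 br b = (\<lambda>x y z. - b (br x y) z + b (br x z) y - b (br y z) x)"

definition ce_d3 :: "('a \<Rightarrow> 'a \<Rightarrow> 'a) \<Rightarrow> ('a \<Rightarrow> 'a \<Rightarrow> 'a \<Rightarrow> real) \<Rightarrow> ('a \<Rightarrow> 'a \<Rightarrow> 'a \<Rightarrow> 'a \<Rightarrow> real)" where
  "ce_d3 br p = (\<lambda>x y z w. - p (br x y) z w + p (br x z) y w - p (br x w) y z
                            - p (br y z) x w + p (br y w) x z - p (br z w) x y)"

definition exact3 :: "('a::real_vector \<Rightarrow> 'a \<Rightarrow> 'a) \<Rightarrow> ('a \<Rightarrow> 'a \<Rightarrow> 'a \<Rightarrow> real) \<Rightarrow> bool" where
  "exact3 br p \<longleftrightarrow> (\<exists>b. two_form b \<and> p = ce_d2 br b)"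

definition H3_nonzero :: "('a::real_vector \<Rightarrow> 'a \<Rightarrow> 'a) \<Rightarrow> bool" where
  "H3_nonzero br \<longleftrightarrow> (\<exists>p. three_form p \<and> ce_d3 br p = (\<lambda>x y z w. 0) \<and> \<not> exact3 br p)"

definition wedge3 :: "('a \<Rightarrow> real) \<Rightarrow> ('a \<Rightarrow> real) \<Rightarrow> ('a \<Rightarrow> real) \<Rightarrow> 'a \<Rightarrow> 'a \<Rightarrow> 'a \<Rightarrow> real" where
  "wedge3 a b c x y z = a x * (b y * c z - b z * c y) - a y * (b x * c z - b z * c x)
                        + a z * (b x * c y - b y * c x)"

definition dual_basis7 :: "(nat \<Rightarrow> 'a::real_vector \<Rightarrow> real) \<Rightarrow> bool" where
  "dual_basis7 f \<longleftrightarrow> (\<forall>i\<in>{1..7}. linear (f i)) \<and>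
     (\<forall>c. (\<forall>x. (\<Sum>i=1..7. c i * f i x) = 0) \<longrightarrow> (\<forall>i\<in>{1..7}. c i = 0))"

definition G2_structure :: "('a::real_vector \<Rightarrow> 'a \<Rightarrow> 'a \<Rightarrow> real) \<Rightarrow> bool" where
  "G2_structure p \<longleftrightarrow> (\<exists>f. dual_basis7 f \<and>
     p = (\<lambda>x y z. wedge3 (f 1) (f 2) (f 7) x y z + wedge3 (f 3) (f 4) (f 7) x y z
                 + wedge3 (f 5) (f 6) (f 7) x y z + wedge3 (f 1) (f 3) (f 5) x y z
                 - wedge3 (f 2) (f 3) (f 6) x y z - wedge3 (f 1) (f 4) (f 6) x y z
                 - wedge3 (f 2) (f 4) (f 5) x y z))"

definition calibrated_G2 :: "('a::real_vector \<Rightarrow> 'a \<Rightarrow> 'a) \<Rightarrow> ('a \<Rightarrow> 'a \<Rightarrow> 'a \<Rightarrow> real) \<Rightarrow> bool" where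
  "calibrated_G2 br p \<longleftrightarrow> G2_structure p \<and> ce_d3 br p = (\<lambda>x y z w. 0)"

end

theory Submission
  imports Defs
begin

(* Suppose phi = d b is exact on a nilpotent Lie algebra g.  Nilpotency gives a nonzero
   central vector X, and then (applying nilpotency again, now to the subspace span {X})
   a vector Z outside span {X} with [g, Z] contained in span {X}.  For such a pair the
   Chevalley--Eilenberg formula shows d b (X, y, Z) = 0 for every y.  On the other hand
   the G2 form is nondegenerate: in coordinates, phi(X, -, Z) is the seven-dimensional
   cross product of X and Z, and a Lagrange-type identity shows that it vanishes only
   when X and Z are parallel.  This contradicts Z not in span {X}. *)

lemma lie_bracket_antisym:
  assumes "lie_algebra br"
  shows "br x y = - br y x"
proof -
  have bil: "bilinear br" and alt: "\<And>x. br x x = 0"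
    using assms by (auto simp: lie_algebra_def)
  have "br (x + y) (x + y) = br x x + br x y + (br y x + br y y)"
    by (simp add: bilinear_ladd[OF bil] bilinear_radd[OF bil])
  then have "br x y + br y x = 0" using alt[of "x + y"] alt[of x] alt[of y] by simp
  then show ?thesis by (simp add: eq_neg_iff_add_eq_0)
qed

lemma lcs_Suc_bracket: "y \<in> lcs br n \<Longrightarrow> br x y \<in> lcs br (Suc n)"
  by (auto intro!: span_base)

text \<open>With S = {0} this yields a nonzero
  central element; with S = span {X} it yields the second vector of the argument.\<close>
lemma nilpotent_escape:
  assumes "nilpotent_lie br" and "0 \<in> S" and "S \<noteq> UNIV"
  shows "\<exists>Z. Z \<notin> S \<and> (\<forall>y. br y Z \<in> S)"
proof -
  obtain n where "lcs br n = {0}" using assms(1) by (auto simp: nilpotent_lie_def)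
  then have "lcs br n \<subseteq> S" using assms(2) by simp
  moreover have "\<not> lcs br 0 \<subseteq> S" using assms(3) by auto
  ultimately have "\<exists>m. \<not> lcs br m \<subseteq> S \<and> lcs br (Suc m) \<subseteq> S"
    by (induction n) blast+
  then obtain m where m: "\<not> lcs br m \<subseteq> S" "lcs br (Suc m) \<subseteq> S" by blast
  then obtain Z where "Z \<in> lcs br m" "Z \<notin> S" by blast
  with m(2) show ?thesis using lcs_Suc_bracket by blast
qed

text \<open>An exact 3-form d b vanishes on (X, y, Z) when X is central and ad Z maps into the
  line through X: every term of the differential pairs b with a multiple of X or with 0.\<close>
lemma exact_form_vanishes:
  assumes "two_form b" and central: "\<forall>y. br X y = 0" and "br y Z \<in> span {X}"
  shows "ce_d2 br b X y Z = 0"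
proof -
  have bil: "bilinear b" and alt: "b X X = 0" using assms(1) by (auto simp: two_form_def)
  obtain k where "br y Z = k *\<^sub>R X" using assms(3) by (auto simp: span_singleton)
  then show ?thesis
    using central alt bilinear_lzero[OF bil] bilinear_lmul[OF bil] by (simp add: ce_d2_def)
qed

section \<open>Linear algebra of a dual basis\<close>

lemma span_singleton_proper:
  assumes "DIM('a::euclidean_space) > 1"
  shows "span {v} \<noteq> (UNIV :: 'a set)"
proof
  assume "span {v} = UNIV"
  then have "dim (UNIV :: 'a set) \<le> card {v}" by (intro dim_le_card) auto
  with assms show False by simp
qed

lemma linear_functional_inner:
  fixes f :: "'a::euclidean_space \<Rightarrow> real"
  assumes "linear f"
  shows "f x = x \<bullet> (\<Sum>b\<in>Basis. f b *\<^sub>R b)"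
  using Linear_Algebra.linear_componentwise[OF assms, of x 1]
  by (simp add: inner_sum_right mult.commute)

lemma independent_functionals_span:
  fixes f :: "'i \<Rightarrow> 'a::euclidean_space \<Rightarrow> real"
  defines "a \<equiv> \<lambda>i. \<Sum>b\<in>Basis. f i b *\<^sub>R b"
  assumes fin: "finite I" and card_I: "card I = DIM('a)"
    and lin: "\<forall>i\<in>I. linear (f i)"
    and indep: "\<forall>c. (\<forall>x. (\<Sum>i\<in>I. c i * f i x) = 0) \<longrightarrow> (\<forall>i\<in>I. c i = 0)"
  shows "span (a ` I) = UNIV"
proof -
  have fa: "f i y = y \<bullet> a i" if "i \<in> I" for i y
    using linear_functional_inner lin that unfolding a_def by blast
  have a_indep: "\<forall>i\<in>I. c i = 0" if "(\<Sum>i\<in>I. c i *\<^sub>R a i) = 0" for c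
  proof -
    have "(\<Sum>i\<in>I. c i * f i y) = y \<bullet> (\<Sum>i\<in>I. c i *\<^sub>R a i)" for y
      by (simp add: inner_sum_right fa)
    then show ?thesis using indep that by auto
  qed
  have inj: "inj_on a I"
  proof (rule inj_onI, rule ccontr)
    fix i j assume ij: "i \<in> I" "j \<in> I" "a i = a j" "i \<noteq> j"
    define c where "c k = (if k = i then 1 else 0) - (if k = j then 1 else (0::real))" for k
    have "(\<Sum>k\<in>I. c k *\<^sub>R a k) = (\<Sum>k\<in>I. (if k = i then a k else 0) - (if k = j then a k else 0))"
      by (rule sum.cong) (auto simp: c_def)
    also have "\<dots> = 0" using ij fin by (simp add: sum_subtractf)
    finally have "c i = 0" using a_indep[of c] ij(1) by blast
    then show False using ij by (simp add: c_def)
  qed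
  have "independent (a ` I)"
  proof (rule notI)
    assume "dependent (a ` I)"
    then obtain u where u: "\<exists>v\<in>a ` I. u v \<noteq> 0" "(\<Sum>v\<in>a ` I. u v *\<^sub>R v) = 0"
      using dependent_finite[of "a ` I"] fin by auto
    then have "(\<Sum>k\<in>I. u (a k) *\<^sub>R a k) = 0" by (simp add: sum.reindex[OF inj])
    then have "\<forall>k\<in>I. u (a k) = 0" by (rule a_indep)
    with u(1) show False by blast
  qed
  then have "dim (a ` I) = card (a ` I)" by (rule dim_eq_card_independent)
  also have "\<dots> = DIM('a)" using card_image[OF inj] card_I by simp
  finally show ?thesis using dim_eq_full by blast
qed

text \<open>Consequently DIM('a) linearly independent linear functionals have no common zero
  except 0: such a zero is orthogonal to a spanning set.\<close>
lemma common_kernel_trivial: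
  fixes f :: "'i \<Rightarrow> 'a::euclidean_space \<Rightarrow> real"
  assumes "finite I" and "card I = DIM('a)" and lin: "\<forall>i\<in>I. linear (f i)"
    and "\<forall>c. (\<forall>x. (\<Sum>i\<in>I. c i * f i x) = 0) \<longrightarrow> (\<forall>i\<in>I. c i = 0)"
    and zero: "\<forall>i\<in>I. f i x = 0"
  shows "x = 0"
proof -
  let ?a = "\<lambda>i. \<Sum>b\<in>Basis. f i b *\<^sub>R b"
  have x_perp: "x \<bullet> ?a i = 0" if "i \<in> I" for i
    using linear_functional_inner[of "f i" x] lin zero that by simp
  have "x \<in> span (?a ` I)" using independent_functionals_span[OF assms(1-4)] by simp
  moreover have "orthogonal x v" if "v \<in> ?a ` I" for v
    using that x_perp by (auto simp: orthogonal_def)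
  ultimately have "orthogonal x x" by (rule orthogonal_to_span)
  then show "x = 0" by (simp add: orthogonal_def)
qed

lemma cauchy_schwarz_defect:
  fixes a b :: "'i \<Rightarrow> real"
  assumes "N = (\<Sum>k\<in>I. a k ^ 2)" and "P = (\<Sum>k\<in>I. a k * b k)"
  shows "(\<Sum>k\<in>I. (N * b k - P * a k) ^ 2) = N * (N * (\<Sum>k\<in>I. b k ^ 2) - P ^ 2)"
proof -
  have "(\<Sum>k\<in>I. (N * b k - P * a k) ^ 2)
      = (\<Sum>k\<in>I. N^2 * b k ^ 2 - 2 * N * P * (a k * b k) + P^2 * a k ^ 2)"
    by (rule sum.cong) (simp_all add: power2_eq_square algebra_simps)
  also have "\<dots> = N^2 * (\<Sum>k\<in>I. b k ^ 2) - 2 * N * P * (\<Sum>k\<in>I. a k * b k) + P^2 * (\<Sum>k\<in>I. a k ^ 2)"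
    by (simp add: sum.distrib sum_subtractf sum_distrib_left)
  also have "\<dots> = N * (N * (\<Sum>k\<in>I. b k ^ 2) - P ^ 2)"
    by (simp add: assms power2_eq_square algebra_simps)
  finally show ?thesis .
qed

section \<open>The G2 cross product\<close>

lemma sum_1_to_7: "(\<Sum>i=1..7. g i) = g 1 + g 2 + g 3 + g 4 + g 5 + g 6 + (g (7::nat)::real)"
  by (simp add: eval_nat_numeral)

text \<open>Components of the cross product on R^7 determined by the standard G2 form.\<close>
definition g2_cross :: "(nat \<Rightarrow> real) \<Rightarrow> (nat \<Rightarrow> real) \<Rightarrow> nat \<Rightarrow> real" where
  "g2_cross a b k =
     (if k = 1 then - a 2 * b 7 + a 7 * b 2 - a 3 * b 5 + a 5 * b 3 + a 4 * b 6 - a 6 * b 4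
      else if k = 2 then a 1 * b 7 - a 7 * b 1 + a 3 * b 6 - a 6 * b 3 + a 4 * b 5 - a 5 * b 4
      else if k = 3 then - a 4 * b 7 + a 7 * b 4 + a 1 * b 5 - a 5 * b 1 - a 2 * b 6 + a 6 * b 2
      else if k = 4 then a 3 * b 7 - a 7 * b 3 - a 1 * b 6 + a 6 * b 1 - a 2 * b 5 + a 5 * b 2
      else if k = 5 then - a 6 * b 7 + a 7 * b 6 - a 1 * b 3 + a 3 * b 1 + a 2 * b 4 - a 4 * b 2
      else if k = 6 then a 5 * b 7 - a 7 * b 5 + a 2 * b 3 - a 3 * b 2 + a 1 * b 4 - a 4 * b 1
      else - a 1 * b 2 + a 2 * b 1 - a 3 * b 4 + a 4 * b 3 - a 5 * b 6 + a 6 * b 5)"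

lemma g2_cross_lagrange:
  "(\<Sum>k=1..7. g2_cross a b k ^ 2)
     = (\<Sum>k=1..7. a k ^ 2) * (\<Sum>k=1..7. b k ^ 2) - (\<Sum>k=1..7. a k * b k) ^ 2"
  unfolding sum_1_to_7 g2_cross_def by simp algebra

lemma g2_cross_zero_parallel:
  assumes "\<forall>k\<in>{1..7}. g2_cross a b k = 0" and "k \<in> {1..7}"
  shows "(\<Sum>i=1..7. a i ^ 2) * b k = (\<Sum>i=1..7. a i * b i) * a k"
proof -
  let ?N = "\<Sum>i=1..7. a i ^ 2" and ?P = "\<Sum>i=1..7. a i * b i"
  have "?N * (\<Sum>i=1..7. b i ^ 2) - ?P ^ 2 = 0"
    using g2_cross_lagrange[of a b] assms(1) by simp
  then have "(\<Sum>i=1..7. (?N * b i - ?P * a i) ^ 2) = 0"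
    using cauchy_schwarz_defect[of ?N a "{1..7::nat}" ?P b] by simp
  then have "(?N * b k - ?P * a k) ^ 2 = 0"
    using sum_nonneg_eq_0_iff[of "{1..7::nat}" "\<lambda>i. (?N * b i - ?P * a i) ^ 2"] assms(2)
    by simp
  then show ?thesis by simp
qed

definition g2_form :: "(nat \<Rightarrow> 'a \<Rightarrow> real) \<Rightarrow> 'a \<Rightarrow> 'a \<Rightarrow> 'a \<Rightarrow> real" where
  "g2_form f = (\<lambda>x y z. wedge3 (f 1) (f 2) (f 7) x y z + wedge3 (f 3) (f 4) (f 7) x y z
                 + wedge3 (f 5) (f 6) (f 7) x y z + wedge3 (f 1) (f 3) (f 5) x y z
                 - wedge3 (f 2) (f 3) (f 6) x y z - wedge3 (f 1) (f 4) (f 6) x y z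
                 - wedge3 (f 2) (f 4) (f 5) x y z)"

lemma G2_structureE:
  assumes "G2_structure p"
  obtains f where "dual_basis7 f" and "p = g2_form f"
  using assms unfolding G2_structure_def g2_form_def by blast

lemma g2_form_contraction:
  "g2_form f X y Z = (\<Sum>k=1..7. g2_cross (\<lambda>i. f i X) (\<lambda>i. f i Z) k * f k y)"
  unfolding g2_form_def wedge3_def sum_1_to_7 g2_cross_def by simp algebra

lemma g2_form_nondegenerate:
  fixes f :: "nat \<Rightarrow> 'a::euclidean_space \<Rightarrow> real"
  assumes dim: "DIM('a) = 7" and db: "dual_basis7 f" and "X \<noteq> 0"
    and vanish: "\<forall>y. g2_form f X y Z = 0"
  shows "Z \<in> span {X}"
proof -
  have lin: "\<forall>i\<in>{1..7}. linear (f i)" and indep: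
    "\<forall>c. (\<forall>x. (\<Sum>i=1..7. c i * f i x) = 0) \<longrightarrow> (\<forall>i\<in>{1..7}. c i = 0)"
    using db by (auto simp: dual_basis7_def)
  have kernel: "x = 0" if "\<forall>i\<in>{1..7}. f i x = 0" for x
    using common_kernel_trivial[of "{1..7::nat}" f x] lin indep dim that by simp
  define N where "N = (\<Sum>i=1..7. f i X ^ 2)"
  define P where "P = (\<Sum>i=1..7. f i X * f i Z)"
  have "\<forall>y. (\<Sum>k=1..7. g2_cross (\<lambda>i. f i X) (\<lambda>i. f i Z) k * f k y) = 0"
    using vanish by (simp add: g2_form_contraction)
  then have "\<forall>k\<in>{1..7}. g2_cross (\<lambda>i. f i X) (\<lambda>i. f i Z) k = 0"
    using spec[OF indep, of "g2_cross (\<lambda>i. f i X) (\<lambda>i. f i Z)"] by blast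
  then have par: "N * f k Z = P * f k X" if "k \<in> {1..7}" for k
    using g2_cross_zero_parallel that unfolding N_def P_def by blast
  have "N \<noteq> 0"
  proof
    assume "N = 0"
    then have "\<forall>k\<in>{1..7}. f k X = 0"
      using sum_nonneg_eq_0_iff[of "{1..7::nat}" "\<lambda>i. f i X ^ 2"] unfolding N_def by simp
    then show False using kernel \<open>X \<noteq> 0\<close> by blast
  qed
  have "\<forall>k\<in>{1..7}. f k (N *\<^sub>R Z - P *\<^sub>R X) = 0"
    using lin par by (simp add: linear_diff linear_scale)
  then have "N *\<^sub>R Z - P *\<^sub>R X = 0" by (rule kernel)
  then have "inverse N *\<^sub>R (N *\<^sub>R Z) = inverse N *\<^sub>R (P *\<^sub>R X)" by simp
  then have "Z = inverse N *\<^sub>R (P *\<^sub>R X)" using \<open>N \<noteq> 0\<close> by simp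
  then show ?thesis by (simp add: span_base span_scale)
qed

lemma three_form_wedge3:
  assumes la: "linear a" and lb: "linear b" and lc: "linear c"
  shows "three_form (wedge3 a b c)"
proof -
  note L = linear_add[OF la] linear_add[OF lb] linear_add[OF lc]
    linear_scale[OF la] linear_scale[OF lb] linear_scale[OF lc]
  have "\<forall>y z. linear (\<lambda>x. wedge3 a b c x y z)" "\<forall>x z. linear (\<lambda>y. wedge3 a b c x y z)"
    "\<forall>x y. linear (\<lambda>z. wedge3 a b c x y z)"
    by (intro allI linearI; simp add: wedge3_def L algebra_simps)+
  moreover have "\<forall>x z. wedge3 a b c x x z = 0" "\<forall>x y. wedge3 a b c x y y = 0"
    "\<forall>x y. wedge3 a b c x y x = 0"
    by (simp_all add: wedge3_def algebra_simps)
  ultimately show ?thesis unfolding three_form_def by blast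
qed

lemma three_form_add:
  "three_form p \<Longrightarrow> three_form q \<Longrightarrow> three_form (\<lambda>x y z. p x y z + q x y z)"
  unfolding three_form_def by (simp add: linear_compose_add)

lemma three_form_diff:
  "three_form p \<Longrightarrow> three_form q \<Longrightarrow> three_form (\<lambda>x y z. p x y z - q x y z)"
  unfolding three_form_def by (simp add: linear_compose_sub)

lemma three_form_g2_form:
  assumes "dual_basis7 f"
  shows "three_form (g2_form f)"
proof -
  have lin: "\<forall>i\<in>{1..7}. linear (f i)" using assms by (simp add: dual_basis7_def)
  have "three_form (wedge3 (f i) (f j) (f k))" if "i \<in> {1..7}" "j \<in> {1..7}" "k \<in> {1..7}"
    for i j k
    using lin that by (simp add: three_form_wedge3)
  then show ?thesis unfolding g2_form_def by (intro three_form_add three_form_diff) auto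
qed

theorem mainTheorem5:
  fixes br :: "'a::euclidean_space \<Rightarrow> 'a \<Rightarrow> 'a"
    and \<phi> :: "'a \<Rightarrow> 'a \<Rightarrow> 'a \<Rightarrow> real"
  assumes "DIM('a) = 7"
    and "nilpotent_lie br"
    and "calibrated_G2 br \<phi>"
  shows "\<not> exact3 br \<phi> \<and> H3_nonzero br"
proof -
  have closed: "ce_d3 br \<phi> = (\<lambda>x y z w. 0)" and "G2_structure \<phi>"
    using assms(3) by (auto simp: calibrated_G2_def)
  then obtain f where db: "dual_basis7 f" and phi: "\<phi> = g2_form f"
    using G2_structureE by blast
  have lie: "lie_algebra br" using assms(2) by (simp add: nilpotent_lie_def)
  have line_proper: "span {v} \<noteq> (UNIV :: 'a set)" for v
    by (rule span_singleton_proper) (simp add: assms(1))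
  have not_exact: "\<not> exact3 br \<phi>"
  proof
    assume "exact3 br \<phi>"
    then obtain b where b: "two_form b" and exact: "\<phi> = ce_d2 br b" by (auto simp: exact3_def)
    have "{0} \<noteq> (UNIV :: 'a set)" using line_proper[of 0] by (simp add: span_insert_0)
    then obtain X where "X \<notin> {0}" and "\<forall>y. br y X \<in> {0}"
      using nilpotent_escape[OF assms(2), of "{0}"] by blast
    then have "X \<noteq> 0" and "\<forall>y. br y X = 0" by simp_all
    then have central: "\<forall>y. br X y = 0"
      using lie_bracket_antisym[OF lie, of X] by (metis minus_zero)
    obtain Z where "Z \<notin> span {X}" and Z: "\<forall>y. br y Z \<in> span {X}"
      using nilpotent_escape[OF assms(2) span_zero line_proper] by blast
    have "g2_form f = ce_d2 br b" using phi exact by simp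
    then have "\<forall>y. g2_form f X y Z = 0"
      using exact_form_vanishes[where br = br and X = X, OF b central] Z by simp
    then show False
      using g2_form_nondegenerate[OF assms(1) db \<open>X \<noteq> 0\<close>] \<open>Z \<notin> span {X}\<close> by blast
  qed
  moreover have "three_form \<phi>" using three_form_g2_form[OF db] phi by simp
  ultimately show ?thesis using closed unfolding H3_nonzero_def by blast
qed

end
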